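(* Let $A$ be an invertible $n\times n$ matrix and $b\in BMO^A(\mathbb R^n)$. Then at least one of the following holds: (i) $b$ has no critical points; (ii) $0$ is the only critical point of $b$; (iii) whenever $0\neq z\in\mathbb R^n$ is a critical point of $b$, the points $A^jz$, $j=1,2,\dots$, are also critical points of $b$.
   Context: For an invertible matrix $A$, $BMO^A(\mathbb R^n)$ is the set of $b\in BMO(\mathbb R^n)$ with $\sup_B|\fint_B b-\fint_{A(B)}b|<\infty$, sup over all balls $B$, where $A(B)=\{Ax:x\in B\}$. A point $z\in\mathbb R^n$ is a critical point of a $BMO$ function $b$ if for every $\varepsilon>0$ and every $N>0$ there is a ball $B\subset B(z,\varepsilon)$ with $\fint_B b>N$. *)

theory Defs
  imports "HOL-Analysis.Analysis"
begin

definition avg :: "(real^'n \<Rightarrow> real) \<Rightarrow> (real^'n) set \<Rightarrow> real" where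
  "avg b S = (LINT x:S|lebesgue. b x) / measure lebesgue S"

definition BMO :: "(real^'n \<Rightarrow> real) set" where
  "BMO = {b. (\<forall>K. compact K \<longrightarrow> set_integrable lebesgue K b) \<and>
     (\<exists>M. \<forall>c r. r > 0 \<longrightarrow> avg (\<lambda>x. \<bar>b x - avg b (ball c r)\<bar>) (ball c r) \<le> M)}"

definition BMO_A :: "real^'n^'n \<Rightarrow> (real^'n \<Rightarrow> real) set" where
  "BMO_A A = {b. b \<in> BMO \<and>
     (\<exists>M. \<forall>c r. r > 0 \<longrightarrow>
        \<bar>avg b (ball c r) - avg b ((\<lambda>x. A *v x) ` ball c r)\<bar> \<le> M)}"

definition critical_point :: "(real^'n \<Rightarrow> real) \<Rightarrow> real^'n \<Rightarrow> bool" where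
  "critical_point b z \<longleftrightarrow> (\<forall>\<epsilon>>0. \<forall>N>0. \<exists>c r. r > 0 \<and> ball c r \<subseteq> ball z \<epsilon> \<and> avg b (ball c r) > N)"

end

theory Submission
  imports Defs
begin

text \<open>
  A critical point z of b is mapped to the critical point A z. Take a small ball B near z on
  which b has a large average. Since A is bi-Lipschitz, A(B) lies in a ball B' near A z and
  contains a concentric ball whose radius is a fixed fraction of that of B'. The BMO^A condition
  makes the average of b over A(B) large as well, and for the BMO function b the average over
  such a comparable subset exceeds the average over B' by at most a constant multiple of the
  mean oscillation. Hence the averages of b over the balls B' near A z are unbounded too, and
  by iteration alternative (iii) always holds.
\<close>

lemma set_integrable_BMO:
  fixes b :: "real^'n \<Rightarrow> real"
  assumes "b \<in> BMO" "S \<in> sets lebesgue" "bounded S"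
  shows "set_integrable lebesgue S b"
proof -
  obtain x r where "S \<subseteq> cball x r"
    using \<open>bounded S\<close> bounded_subset_cball by blast
  moreover have "set_integrable lebesgue (cball x r) b"
    using assms(1) compact_cball unfolding BMO_def by blast
  ultimately show ?thesis
    using set_integrable_subset assms(2) by blast
qed

lemma measure_ball_scale:
  fixes x :: "real^'n"
  assumes "0 \<le> k" "0 \<le> s"
  shows "measure lebesgue (ball x (k * s)) = k ^ CARD('n) * measure lebesgue (ball x s)"
  using content_ball_conv_unit_ball[of "k * s" x] content_ball_conv_unit_ball[of s x] assms
  by (simp add: power_mult_distrib)

lemma avg_le_avg_add_mean_oscillation:
  fixes b :: "real^'n \<Rightarrow> real"
  assumes intB: "set_integrable lebesgue B b" and B: "B \<in> lmeasurable"
    and E: "E \<in> sets lebesgue" "E \<subseteq> B" "0 < measure lebesgue E"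
    and BE: "measure lebesgue B \<le> C * measure lebesgue E"
  shows "avg b E \<le> avg b B + C * avg (\<lambda>x. \<bar>b x - avg b B\<bar>) B"
proof -
  define a where "a = avg b B"
  define osc where "osc = avg (\<lambda>x. \<bar>b x - a\<bar>) B"
  have Efm: "E \<in> lmeasurable"
    using fmeasurableI2[OF B E(2,1)] .
  have "measure lebesgue E \<le> measure lebesgue B"
    using measure_mono_fmeasurable[OF E(2,1) B] .
  then have mB: "0 < measure lebesgue B" using E(3) by linarith
  have intE: "set_integrable lebesgue E b"
    using set_integrable_subset[OF intB E(1,2)] .
  have const: "set_integrable lebesgue S (\<lambda>_. a)" if "S \<in> lmeasurable" for S
    using that unfolding set_integrable_def fmeasurable_def
    by (auto intro!: integrable_scaleR_left integrable_real_indicator)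
  have oscE: "set_integrable lebesgue E (\<lambda>x. \<bar>b x - a\<bar>)"
    using intE const[OF Efm] by (auto intro: set_integrable_abs)
  have oscB: "set_integrable lebesgue B (\<lambda>x. \<bar>b x - a\<bar>)"
    using intB const[OF B] by (auto intro: set_integrable_abs)
  have osc_nonneg: "0 \<le> osc"
    unfolding osc_def avg_def set_lebesgue_integral_def by (simp add: indicator_def)
  have "(LINT x:E|lebesgue. a) = measure lebesgue E *\<^sub>R a"
    using Efm unfolding fmeasurable_def by (intro set_integral_const) auto
  then have "(LINT x:E|lebesgue. b x) - a * measure lebesgue E = (LINT x:E|lebesgue. b x - a)"
    using intE const[OF Efm] by simp
  also have "\<dots> \<le> (LINT x:E|lebesgue. \<bar>b x - a\<bar>)"
    using intE const[OF Efm] oscE by (intro set_integral_mono) auto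
  also have "\<dots> \<le> (LINT x:B|lebesgue. \<bar>b x - a\<bar>)"
    using oscE oscB E(2) unfolding set_lebesgue_integral_def set_integrable_def
    by (intro integral_mono) (auto simp: indicator_def)
  also have "\<dots> = measure lebesgue B * osc"
    unfolding osc_def avg_def using mB by simp
  also have "\<dots> \<le> C * measure lebesgue E * osc"
    using BE osc_nonneg by (rule mult_right_mono)
  finally have "(LINT x:E|lebesgue. b x) \<le> (a + C * osc) * measure lebesgue E"
    by (simp add: algebra_simps)
  then have "avg b E \<le> a + C * osc"
    unfolding avg_def using E(3) by (simp add: divide_le_eq)
  then show ?thesis
    unfolding osc_def a_def .
qed

lemma BMO_avg_le_avg_ball:
  fixes b :: "real^'n \<Rightarrow> real"
  assumes "b \<in> BMO" "0 < k"
  obtains K where "\<And>E x s. 0 < s \<Longrightarrow> E \<in> sets lebesgue \<Longrightarrow> ball x (k * s) \<subseteq> E \<Longrightarrow>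
    E \<subseteq> ball x s \<Longrightarrow> avg b E \<le> avg b (ball x s) + K"
proof -
  obtain M where M: "\<And>c r. r > 0 \<Longrightarrow> avg (\<lambda>x. \<bar>b x - avg b (ball c r)\<bar>) (ball c r) \<le> M"
    using assms(1) unfolding BMO_def by auto
  define C :: real where "C = 1 / k ^ CARD('n)"
  have "0 < C"
    unfolding C_def using assms(2) by simp
  show thesis
  proof (rule that[of "C * M"])
    fix E :: "(real^'n) set" and x :: "real^'n" and s :: real
    assume s: "0 < s" and E: "E \<in> sets lebesgue" "ball x (k * s) \<subseteq> E" "E \<subseteq> ball x s"
    have ball_le_E: "measure lebesgue (ball x (k * s)) \<le> measure lebesgue E"
      using E by (intro measure_mono_fmeasurable) (auto intro: fmeasurableI2[OF lmeasurable_ball])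
    have "0 < measure lebesgue (ball x (k * s))"
      using content_ball_pos[of "k * s" x] assms(2) s by simp
    then have "0 < measure lebesgue E"
      using ball_le_E by linarith
    moreover have "measure lebesgue (ball x s) = C * measure lebesgue (ball x (k * s))"
      using measure_ball_scale[of k s x] assms(2) s unfolding C_def by simp
    then have "measure lebesgue (ball x s) \<le> C * measure lebesgue E"
      using ball_le_E \<open>0 < C\<close> by simp
    ultimately have "avg b E \<le> avg b (ball x s) + C * avg (\<lambda>y. \<bar>b y - avg b (ball x s)\<bar>) (ball x s)"
      using assms(1) E
      by (intro avg_le_avg_add_mean_oscillation set_integrable_BMO) auto
    also have "\<dots> \<le> avg b (ball x s) + C * M"
      using M[OF s, of x] \<open>0 < C\<close> by simp
    finally show "avg b E \<le> avg b (ball x s) + C * M" .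
  qed
qed

lemma invertible_matrix_bi_Lipschitz:
  fixes A :: "real^'n^'n"
  assumes "invertible A"
  obtains m L where "0 < m" "0 < L"
    "\<And>x y. m * dist x y \<le> dist (A *v x) (A *v y)"
    "\<And>x y. dist (A *v x) (A *v y) \<le> L * dist x y"
proof -
  obtain A' :: "real^'n^'n" where "A' ** A = mat 1"
    using assms invertible_def by blast
  then have "(*v) A' \<circ> (*v) A = id"
    by (simp add: fun_eq_iff matrix_vector_mul_assoc)
  then obtain m where "0 < m" and lower: "\<And>v. m * norm v \<le> norm (A *v v)"
    using linear_invertible_bounded_below_pos[OF matrix_vector_mul_linear[of A] matrix_vector_mul_linear[of A']]
    by blast
  obtain L where "0 < L" and upper: "\<And>v. norm (A *v v) \<le> L * norm v"
    using linear_bounded_pos[OF matrix_vector_mul_linear[of A]] by blast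
  show thesis
  proof (rule that[OF \<open>0 < m\<close> \<open>0 < L\<close>])
    show "m * dist x y \<le> dist (A *v x) (A *v y)" for x y
      using lower[of "x - y"] by (simp add: dist_norm matrix_vector_mult_diff_distrib)
    show "dist (A *v x) (A *v y) \<le> L * dist x y" for x y
      using upper[of "x - y"] by (simp add: dist_norm matrix_vector_mult_diff_distrib)
  qed
qed

lemma bi_Lipschitz_image_ball:
  fixes f :: "'a::metric_space \<Rightarrow> 'b::metric_space"
  assumes "surj f" "0 < m" "0 < L"
    and lower: "\<And>x y. m * dist x y \<le> dist (f x) (f y)"
    and upper: "\<And>x y. dist (f x) (f y) \<le> L * dist x y"
  shows "ball (f c) (m * r) \<subseteq> f ` ball c r" and "f ` ball c r \<subseteq> ball (f c) (L * r)"
proof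
  fix y assume y: "y \<in> ball (f c) (m * r)"
  obtain w where "y = f w"
    using surjD[OF \<open>surj f\<close>] by blast
  have "m * dist c w \<le> dist (f c) y"
    using lower[of c w] \<open>y = f w\<close> by simp
  also have "\<dots> < m * r"
    using y by simp
  finally have "w \<in> ball c r"
    using \<open>0 < m\<close> by simp
  then show "y \<in> f ` ball c r"
    using \<open>y = f w\<close> by blast
next
  show "f ` ball c r \<subseteq> ball (f c) (L * r)"
  proof
    fix y assume "y \<in> f ` ball c r"
    then obtain w where w: "w \<in> ball c r" "y = f w"
      by blast
    have "dist (f c) y \<le> L * dist c w"
      using upper[of c w] w(2) by simp
    also have "\<dots> < L * r"
      using w(1) \<open>0 < L\<close> by simp
    finally show "y \<in> ball (f c) (L * r)"
      by simp
  qed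
qed

lemma Lipschitz_ball_subset_ball:
  fixes f :: "'a::euclidean_space \<Rightarrow> 'b::euclidean_space"
  assumes upper: "\<And>x y. dist (f x) (f y) \<le> L * dist x y" and "0 \<le> L"
    and "ball c r \<subseteq> ball z \<delta>"
  shows "ball (f c) (L * r) \<subseteq> ball (f z) (L * \<delta>)"
proof (cases "r \<le> 0")
  case True
  then have "L * r \<le> 0"
    using mult_nonneg_nonpos[OF \<open>0 \<le> L\<close>] by blast
  then show ?thesis
    by (simp add: ball_subset_ball_iff)
next
  case False
  then have "dist c z + r \<le> \<delta>"
    using assms(3) ball_subset_ball_iff by blast
  then have "L * dist c z + L * r \<le> L * \<delta>"
    using \<open>0 \<le> L\<close> by (metis distrib_left mult_left_mono)
  then have "dist (f c) (f z) + L * r \<le> L * \<delta>"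
    using upper[of c z] by linarith
  then show ?thesis
    by (simp add: ball_subset_ball_iff)
qed

lemma BMO_A_avg_ball_le_avg_image_ball:
  fixes A :: "real^'n^'n" and b :: "real^'n \<Rightarrow> real"
  assumes "invertible A" "b \<in> BMO_A A"
  obtains L K where "0 < L" "\<And>x y. dist (A *v x) (A *v y) \<le> L * dist x y"
    "\<And>c r. 0 < r \<Longrightarrow> avg b (ball c r) \<le> avg b (ball (A *v c) (L * r)) + K"
proof -
  obtain M where M: "\<And>c r. 0 < r \<Longrightarrow>
      \<bar>avg b (ball c r) - avg b ((\<lambda>x. A *v x) ` ball c r)\<bar> \<le> M"
    using assms(2) unfolding BMO_A_def by blast
  obtain m L where mL: "0 < m" "0 < L"
    "\<And>x y. m * dist x y \<le> dist (A *v x) (A *v y)"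
    "\<And>x y. dist (A *v x) (A *v y) \<le> L * dist x y"
    using invertible_matrix_bi_Lipschitz[OF assms(1)] by blast
  have "b \<in> BMO"
    using assms(2) unfolding BMO_A_def by blast
  moreover have "0 < m / L"
    using mL(1,2) by simp
  ultimately obtain K where K: "\<And>E x s. 0 < s \<Longrightarrow> E \<in> sets lebesgue \<Longrightarrow>
      ball x (m / L * s) \<subseteq> E \<Longrightarrow> E \<subseteq> ball x s \<Longrightarrow> avg b E \<le> avg b (ball x s) + K"
    using BMO_avg_le_avg_ball by blast
  have surj: "surj ((*v) A)"
    using assms(1) invertible_eq_bij bij_is_surj by blast
  show thesis
  proof (rule that[OF mL(2,4)])
    fix c :: "real^'n" and r :: real
    assume "0 < r"
    define E where "E = (\<lambda>x. A *v x) ` ball c r"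
    have "m / L * (L * r) = m * r"
      using mL(2) by simp
    then have E_lower: "ball (A *v c) (m / L * (L * r)) \<subseteq> E"
      using bi_Lipschitz_image_ball(1)[OF surj mL, of c r] unfolding E_def by simp
    have E_upper: "E \<subseteq> ball (A *v c) (L * r)"
      using bi_Lipschitz_image_ball(2)[OF surj mL, of c r] unfolding E_def by simp
    have "open E"
      unfolding E_def by (rule open_surjective_linear_image[OF open_ball matrix_vector_mul_linear surj])
    moreover have "bounded E"
      using E_upper bounded_subset bounded_ball by blast
    ultimately have "E \<in> sets lebesgue"
      using lmeasurable_open fmeasurableD by blast
    have "avg b (ball c r) \<le> avg b E + M"
      using M[OF \<open>0 < r\<close>, of c] unfolding E_def by linarith
    also have "\<dots> \<le> avg b (ball (A *v c) (L * r)) + (K + M)"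
      using K[OF _ \<open>E \<in> sets lebesgue\<close> E_lower E_upper] \<open>0 < r\<close> mL(2) by simp
    finally show "avg b (ball c r) \<le> avg b (ball (A *v c) (L * r)) + (K + M)" .
  qed
qed

lemma critical_point_matrix_vector_mult:
  fixes A :: "real^'n^'n" and b :: "real^'n \<Rightarrow> real"
  assumes "invertible A" "b \<in> BMO_A A" "critical_point b z"
  shows "critical_point b (A *v z)"
  unfolding critical_point_def
proof (intro allI impI)
  fix \<epsilon> N :: real
  assume "0 < \<epsilon>" "0 < N"
  obtain L K where "0 < L" and Lipschitz: "\<And>x y. dist (A *v x) (A *v y) \<le> L * dist x y"
    and K: "\<And>c r. 0 < r \<Longrightarrow> avg b (ball c r) \<le> avg b (ball (A *v c) (L * r)) + K"
    using BMO_A_avg_ball_le_avg_image_ball[OF assms(1,2)] by blast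
  have "0 < \<epsilon> / L"
    using \<open>0 < \<epsilon>\<close> \<open>0 < L\<close> by simp
  moreover have "0 < N + \<bar>K\<bar>"
    using \<open>0 < N\<close> by (intro add_pos_nonneg) auto
  ultimately obtain c r where r: "0 < r" "ball c r \<subseteq> ball z (\<epsilon> / L)"
      "N + \<bar>K\<bar> < avg b (ball c r)"
    using assms(3) unfolding critical_point_def by blast
  have "N < avg b (ball (A *v c) (L * r))"
    using K[OF r(1), of c] r(3) by linarith
  moreover have "ball (A *v c) (L * r) \<subseteq> ball (A *v z) \<epsilon>"
    using Lipschitz_ball_subset_ball[of "(*v) A" L, OF Lipschitz _ r(2)] \<open>0 < L\<close> by simp
  moreover have "0 < L * r"
    using r(1) \<open>0 < L\<close> by simp
  ultimately show "\<exists>c r. 0 < r \<and> ball c r \<subseteq> ball (A *v z) \<epsilon> \<and> N < avg b (ball c r)"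
    by blast
qed

lemma critical_point_funpow_matrix_vector_mult:
  fixes A :: "real^'n^'n" and b :: "real^'n \<Rightarrow> real"
  assumes "invertible A" "b \<in> BMO_A A" "critical_point b z"
  shows "critical_point b (((\<lambda>x. A *v x) ^^ j) z)"
proof (induction j)
  case 0
  then show ?case using assms(3) by simp
next
  case (Suc j)
  then show ?case
    using critical_point_matrix_vector_mult[OF assms(1,2)] by simp
qed

theorem proposition3p8:
  fixes A :: "real^'n^'n" and b :: "real^'n \<Rightarrow> real"
  assumes "invertible A" and "b \<in> BMO_A A"
  shows "(\<forall>z. \<not> critical_point b z)
    \<or> {z. critical_point b z} = {0}
    \<or> (\<forall>z. z \<noteq> 0 \<and> critical_point b z \<longrightarrow>
          (\<forall>j::nat. j \<ge> 1 \<longrightarrow> critical_point b (((\<lambda>x. A *v x) ^^ j) z)))"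
  by (intro disjI2 allI impI) (use critical_point_funpow_matrix_vector_mult[OF assms] in blast)

end
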